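(* If $N$ is a probabilistic algorithmic knowledge structure in which agent $i$ uses a knowledge algorithm $\mathtt{A}_i$ that is $\phi$-complete and respects negation, then $N\models X_i\phi\Leftrightarrow\neg X_i\neg\phi$.
   Context: A derandomizer is $v=(v_1,\dots,v_n)$ with each $v_i$ a sequence of coin-toss outcomes; $V$ is the set of derandomizers. A probabilistic algorithmic knowledge structure is $N=(S,\pi,L_1,\dots,L_n,\mathtt{A}^d_1,\dots,\mathtt{A}^d_n,\nu)$ with states $S$, truth assignments $\pi(s)$ to primitive propositions, local-state functions $L_i$, deterministic functions $\mathtt{A}^d_i(\psi,\ell,s,v_i)\in\{$"Yes","No","?"$\}$ (derandomized version of agent $i$'s knowledge algorithm $\mathtt{A}_i$), and a probability distribution $\nu$ on $V$ such that each answer set $\{v:\mathtt{A}^d_i(\psi,L_i(s),s,v_i)=a\}$ is nonempty iff it has positive $\nu$-probability. $(N,s,v)\models X_i\psi$ iff $\mathtt{A}^d_i(\psi,L_i(s),s,v_i)=$"Yes"; $\neg$ and $\Leftrightarrow$ are interpreted as usual; $N\models\chi$ means $(N,s,v)\models\chi$ for all $s\in S$, $v\in V$. $\mathtt{A}_i$ is $\phi$-complete if $\mathtt{A}^d_i(\phi,L_i(s),s,v_i)\in\{$"Yes","No"$\}$ for all $s,v$. $\mathtt{A}_i$ weakly respects negation if for all $\psi,\ell,s,v$: $\mathtt{A}^d_i(\neg\psi,\ell,s,v_i)$ is "Yes" when $\mathtt{A}^d_i(\psi,\ell,s,v_i)=$"No", "No" when it is "Yes", "?" when it is "?"; it strongly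 respects negation if $\mathtt{A}^d_i(\neg\psi,\ell,s,v_i)$ is "Yes" when $\mathtt{A}^d_i(\psi,\ell,s,v_i)\ne$"Yes" and "No" when it is "Yes"; it respects negation if it weakly or strongly respects negation. *)

theory Defs
  imports "HOL-Probability.Probability"
begin

datatype answer = Yes | No | Unk

datatype ('p, 'ag) fm =
    Prim 'p
  | Neg "('p, 'ag) fm"
  | And "('p, 'ag) fm" "('p, 'ag) fm"
  | Iff "('p, 'ag) fm" "('p, 'ag) fm"
  | X 'ag "('p, 'ag) fm"

text \<open>A coin-toss sequence is an infinite sequence of outcomes; a derandomizer
  assigns one such sequence to each agent.  The set V of derandomizers is the
  whole type.\<close>
type_synonym coins = "nat \<Rightarrow> bool"
type_synonym 'ag derand = "'ag \<Rightarrow> coins"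

record ('st, 'p, 'ag, 'l) pak_structure =
  States :: "'st set"
  Pi     :: "'st \<Rightarrow> 'p \<Rightarrow> bool"
  Loc    :: "'ag \<Rightarrow> 'st \<Rightarrow> 'l"
  Alg    :: "'ag \<Rightarrow> ('p, 'ag) fm \<Rightarrow> 'l \<Rightarrow> 'st \<Rightarrow> coins \<Rightarrow> answer"
  Nu     :: "'ag derand measure"

definition pak_structure :: "('st, 'p, 'ag, 'l) pak_structure \<Rightarrow> bool" where
  "pak_structure N \<longleftrightarrow>
     prob_space (Nu N) \<and> space (Nu N) = UNIV \<and>
     (\<forall>i \<psi> s a. s \<in> States N \<longrightarrow>
        (let E = {v. Alg N i \<psi> (Loc N i s) s (v i) = a} in
           E \<in> sets (Nu N) \<and> (E \<noteq> {} \<longleftrightarrow> measure (Nu N) E > 0)))"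

fun sat :: "('st, 'p, 'ag, 'l) pak_structure \<Rightarrow> 'st \<Rightarrow> 'ag derand \<Rightarrow> ('p, 'ag) fm \<Rightarrow> bool" where
  "sat N s v (Prim p) = Pi N s p"
| "sat N s v (Neg \<phi>) = (\<not> sat N s v \<phi>)"
| "sat N s v (And \<phi> \<psi>) = (sat N s v \<phi> \<and> sat N s v \<psi>)"
| "sat N s v (Iff \<phi> \<psi>) = (sat N s v \<phi> \<longleftrightarrow> sat N s v \<psi>)"
| "sat N s v (X i \<phi>) = (Alg N i \<phi> (Loc N i s) s (v i) = Yes)"

definition valid :: "('st, 'p, 'ag, 'l) pak_structure \<Rightarrow> ('p, 'ag) fm \<Rightarrow> bool" where
  "valid N \<theta> \<longleftrightarrow> (\<forall>s \<in> States N. \<forall>v. sat N s v \<theta>)"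

definition complete_for :: "('st, 'p, 'ag, 'l) pak_structure \<Rightarrow> 'ag \<Rightarrow> ('p, 'ag) fm \<Rightarrow> bool" where
  "complete_for N i \<phi> \<longleftrightarrow>
     (\<forall>s \<in> States N. \<forall>v. Alg N i \<phi> (Loc N i s) s (v i) \<in> {Yes, No})"

definition weakly_respects_negation :: "('st, 'p, 'ag, 'l) pak_structure \<Rightarrow> 'ag \<Rightarrow> bool" where
  "weakly_respects_negation N i \<longleftrightarrow>
     (\<forall>\<psi> l s c.
        (Alg N i \<psi> l s c = No \<longrightarrow> Alg N i (Neg \<psi>) l s c = Yes) \<and>
        (Alg N i \<psi> l s c = Yes \<longrightarrow> Alg N i (Neg \<psi>) l s c = No) \<and>
        (Alg N i \<psi> l s c = Unk \<longrightarrow> Alg N i (Neg \<psi>) l s c = Unk))"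

definition strongly_respects_negation :: "('st, 'p, 'ag, 'l) pak_structure \<Rightarrow> 'ag \<Rightarrow> bool" where
  "strongly_respects_negation N i \<longleftrightarrow>
     (\<forall>\<psi> l s c.
        (Alg N i \<psi> l s c \<noteq> Yes \<longrightarrow> Alg N i (Neg \<psi>) l s c = Yes) \<and>
        (Alg N i \<psi> l s c = Yes \<longrightarrow> Alg N i (Neg \<psi>) l s c = No))"

definition respects_negation :: "('st, 'p, 'ag, 'l) pak_structure \<Rightarrow> 'ag \<Rightarrow> bool" where
  "respects_negation N i \<longleftrightarrow> weakly_respects_negation N i \<or> strongly_respects_negation N i"

end

theory Submission
  imports Defs
begin

lemma respects_negation_Yes_imp_Neg_No:
  assumes "respects_negation N i" and "Alg N i \<psi> l s c = Yes"
  shows "Alg N i (Neg \<psi>) l s c = No"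
  using assms
  unfolding respects_negation_def weakly_respects_negation_def strongly_respects_negation_def
  by blast

lemma respects_negation_No_imp_Neg_Yes:
  assumes "respects_negation N i" and "Alg N i \<psi> l s c = No"
  shows "Alg N i (Neg \<psi>) l s c = Yes"
  using assms
  unfolding respects_negation_def weakly_respects_negation_def strongly_respects_negation_def
  by force

lemma sat_X_iff_not_X_Neg:
  assumes "respects_negation N i"
    and "Alg N i \<phi> (Loc N i s) s (v i) \<in> {Yes, No}"
  shows "sat N s v (Iff (X i \<phi>) (Neg (X i (Neg \<phi>))))"
  using assms respects_negation_Yes_imp_Neg_No respects_negation_No_imp_Neg_Yes
  by fastforce

text \<open>The equivalence holds pointwise in every state and for every derandomizer.\<close>

theorem lemmaA2:
  fixes N :: "('st, 'p, 'ag, 'l) pak_structure" and i :: 'ag and \<phi> :: "('p, 'ag) fm"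
  assumes "pak_structure N"
    and "complete_for N i \<phi>"
    and "respects_negation N i"
  shows "valid N (Iff (X i \<phi>) (Neg (X i (Neg \<phi>))))"
  unfolding valid_def
proof (intro ballI allI)
  fix s v
  assume "s \<in> States N"
  then have "Alg N i \<phi> (Loc N i s) s (v i) \<in> {Yes, No}"
    using assms(2) unfolding complete_for_def by blast
  then show "sat N s v (Iff (X i \<phi>) (Neg (X i (Neg \<phi>))))"
    using assms(3) by (rule sat_X_iff_not_X_Neg[rotated])
qed

end
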